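(* Let $h_{11},h_{20},h_{31},h_{40}\in\mathbb{R}$ and consider the planar Hamiltonian system $$\dot x=\frac{\partial \bar H_2}{\partial y}(x,y),\qquad \dot y=-\frac{\partial \bar H_2}{\partial x}(x,y),$$ where $$\bar H_2(x,y)=\tfrac12 y^2+(8h_{11}h_{20}+4h_{31})x^3+(4h_{20}-2h_{11}^2)x^2y+\tfrac12 y^3+\big[2h_{11}^2(h_{11}^2+4h_{20})+8(h_{11}h_{31}-h_{40})\big]x^4+(8h_{11}h_{20}+4h_{31})x^3y+(2h_{20}-h_{11}^2)x^2y^2+\tfrac18 y^4 .$$ Consider the conditions (A) $h_{31}\neq -2h_{11}h_{20}$; (B) $h_{31}=-2h_{11}h_{20}$ and $h_{20}^2+h_{40}>0$; (C) $h_{31}=-2h_{11}h_{20}$ and $h_{20}^2+h_{40}<0$. Then the origin is an isolated nilpotent singular point of this system if and only if one of (A), (B), (C) holds. Moreover, the origin is (i) a cusp of order 1 if and only if (A) holds; (ii) a nilpotent saddle of order 1 if and only if (B) holds; (iii) a nilpotent center of order 1 if and only if (C) holds.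
   Context: Let $H(x,y)=\frac{\omega}{2}y^2+\sum_{i+j\ge 3}h_{ij}x^iy^j$ with $\omega>0$ be analytic near the origin (so the origin is a nilpotent critical point of $\dot x=H_y,\ \dot y=-H_x$). By the implicit function theorem there is a unique analytic function $\varphi(x)=O(x^2)$ with $H_y(x,\varphi(x))=0$ for $|x|$ small. Write $H_0^*(x)=H(x,\varphi(x))=\sum_{j\ge k}h_jx^j$ with $h_k\neq 0$, $k\ge 2$ (when $H_0^*\not\equiv 0$). The origin is called a cusp of order $m$ if $k=2m+1$; a nilpotent center of order $m$ if $k=2m+2$ and $h_k>0$; a nilpotent saddle of order $m$ if $k=2m+2$ and $h_k<0$. *)

theory Defs
  imports "HOL-Analysis.Analysis"
begin

definition Hbar2 :: "real \<Rightarrow> real \<Rightarrow> real \<Rightarrow> real \<Rightarrow> real \<Rightarrow> real \<Rightarrow> real" where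
  "Hbar2 h11 h20 h31 h40 x y =
     1/2 * y^2 + (8*h11*h20 + 4*h31) * x^3 + (4*h20 - 2*h11^2) * x^2 * y + 1/2 * y^3
     + (2*h11^2*(h11^2 + 4*h20) + 8*(h11*h31 - h40)) * x^4
     + (8*h11*h20 + 4*h31) * x^3 * y + (2*h20 - h11^2) * x^2 * y^2 + 1/8 * y^4"

definition pdx :: "(real \<Rightarrow> real \<Rightarrow> real) \<Rightarrow> real \<Rightarrow> real \<Rightarrow> real" where
  "pdx H x y = deriv (\<lambda>t. H t y) x"
definition pdy :: "(real \<Rightarrow> real \<Rightarrow> real) \<Rightarrow> real \<Rightarrow> real \<Rightarrow> real" where
  "pdy H x y = deriv (\<lambda>t. H x t) y"

definition ham_field :: "(real \<Rightarrow> real \<Rightarrow> real) \<Rightarrow> real \<Rightarrow> real \<Rightarrow> real \<times> real" where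
  "ham_field H x y = (pdy H x y, - pdx H x y)"

definition singular_point :: "(real \<Rightarrow> real \<Rightarrow> real) \<Rightarrow> real \<Rightarrow> real \<Rightarrow> bool" where
  "singular_point H x y \<longleftrightarrow> ham_field H x y = (0, 0)"

definition isolated_singular_point :: "(real \<Rightarrow> real \<Rightarrow> real) \<Rightarrow> real \<Rightarrow> real \<Rightarrow> bool" where
  "isolated_singular_point H x y \<longleftrightarrow> singular_point H x y \<and>
     (\<exists>e>0. \<forall>u v. (u, v) \<noteq> (x, y) \<and> dist (u, v) (x, y) < e \<longrightarrow> \<not> singular_point H u v)"

definition ham_jacobian :: "(real \<Rightarrow> real \<Rightarrow> real) \<Rightarrow> real \<Rightarrow> real \<Rightarrow> real^2^2" where
  "ham_jacobian H x y =
     vector [vector [pdx (pdy H) x y, pdy (pdy H) x y],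
             vector [- pdx (pdx H) x y, - pdy (pdx H) x y]]"

definition mat_pow :: "real^2^2 \<Rightarrow> nat \<Rightarrow> real^2^2" where
  "mat_pow M n = ((\<lambda>A. A ** M) ^^ n) (mat 1)"

definition nilpotent_matrix :: "real^2^2 \<Rightarrow> bool" where
  "nilpotent_matrix M \<longleftrightarrow> (\<exists>n. mat_pow M n = 0)"

definition nilpotent_singular_point :: "(real \<Rightarrow> real \<Rightarrow> real) \<Rightarrow> real \<Rightarrow> real \<Rightarrow> bool" where
  "nilpotent_singular_point H x y \<longleftrightarrow> singular_point H x y \<and>
     nilpotent_matrix (ham_jacobian H x y) \<and> ham_jacobian H x y \<noteq> 0"

definition isolated_nilpotent_singular_point :: "(real \<Rightarrow> real \<Rightarrow> real) \<Rightarrow> real \<Rightarrow> real \<Rightarrow> bool" where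
  "isolated_nilpotent_singular_point H x y \<longleftrightarrow>
     isolated_singular_point H x y \<and> nilpotent_singular_point H x y"

text \<open>H_0^*(x) = H(x, phi(x)) where phi is the (unique, by the implicit function theorem)
  continuous solution of H_y(x, phi x) = 0 near 0 with phi 0 = 0.
  H0star_leading H k a means: the lowest-order nonzero Taylor coefficient of H_0^* at 0
  is h_k = a (with a \<noteq> 0).\<close>
definition H0star_leading :: "(real \<Rightarrow> real \<Rightarrow> real) \<Rightarrow> nat \<Rightarrow> real \<Rightarrow> bool" where
  "H0star_leading H k a \<longleftrightarrow>
     (\<exists>\<delta>>0. \<exists>\<phi>. \<phi> 0 = 0 \<and> continuous_on {-\<delta><..<\<delta>} \<phi> \<and>
        (\<forall>x\<in>{-\<delta><..<\<delta>}. pdy H x (\<phi> x) = 0) \<and>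
        (\<forall>j<k. (deriv ^^ j) (\<lambda>x. H x (\<phi> x)) 0 = 0) \<and>
        (deriv ^^ k) (\<lambda>x. H x (\<phi> x)) 0 / fact k = a) \<and> a \<noteq> 0"

definition cusp_of_order :: "(real \<Rightarrow> real \<Rightarrow> real) \<Rightarrow> nat \<Rightarrow> bool" where
  "cusp_of_order H m \<longleftrightarrow> (\<exists>a. H0star_leading H (2*m+1) a)"

definition nilpotent_center_of_order :: "(real \<Rightarrow> real \<Rightarrow> real) \<Rightarrow> nat \<Rightarrow> bool" where
  "nilpotent_center_of_order H m \<longleftrightarrow> (\<exists>a>0. H0star_leading H (2*m+2) a)"

definition nilpotent_saddle_of_order :: "(real \<Rightarrow> real \<Rightarrow> real) \<Rightarrow> nat \<Rightarrow> bool" where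
  "nilpotent_saddle_of_order H m \<longleftrightarrow> (\<exists>a<0. H0star_leading H (2*m+2) a)"

end

theory Submission
  imports Defs
begin

text \<open>With \<open>a = 8 h\<^sub>1\<^sub>1 h\<^sub>2\<^sub>0 + 4 h\<^sub>3\<^sub>1\<close>, \<open>b = 4 h\<^sub>2\<^sub>0 - 2 h\<^sub>1\<^sub>1\<^sup>2\<close> and
  \<open>e = 2 h\<^sub>1\<^sub>1 a - 8 (h\<^sub>2\<^sub>0\<^sup>2 + h\<^sub>4\<^sub>0)\<close> the Hamiltonian is \<open>G\<^sup>2/2 + a x\<^sup>3 (1 + y) + e x\<^sup>4\<close>
  with \<open>G = y + b x\<^sup>2 + y\<^sup>2/2\<close>, and its linear part at the origin is always the nilpotent
  Jordan block. Since \<open>(1 + y) H\<^sub>x - 2 b x H\<^sub>y = x\<^sup>2 (3 a (1 + y)\<^sup>2 + 4 e x (1 + y) - 2 a b x\<^sup>2)\<close>,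
  the origin is an isolated singular point unless \<open>a = e = 0\<close>, in which case the whole
  curve \<open>G = 0\<close> consists of singular points. Along the branch \<open>y = \<phi> x\<close> of \<open>H\<^sub>y = 0\<close> the
  derivatives of \<open>H (x, \<phi> x)\<close> are \<open>H\<^sub>x\<close> and \<open>H\<^sub>x\<^sub>x - H\<^sub>x\<^sub>y\<^sup>2 / H\<^sub>y\<^sub>y\<close>, which gives
  \<open>H\<^sub>0\<^sup>* = a x\<^sup>3 + O(x\<^sup>4)\<close>; and if \<open>a = 0\<close> the branch lies on \<open>G = 0\<close>, where \<open>H\<^sub>0\<^sup>* = e x\<^sup>4\<close>.\<close>

definition nf_curve :: "real \<Rightarrow> real \<Rightarrow> real \<Rightarrow> real" where
  "nf_curve b x y = y + b*x^2 + y^2/2"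

definition Hnf :: "real \<Rightarrow> real \<Rightarrow> real \<Rightarrow> real \<Rightarrow> real \<Rightarrow> real" where
  "Hnf a b e x y = 1/2 * (nf_curve b x y)^2 + a*x^3*(1+y) + e*x^4"

definition Hnf_x :: "real \<Rightarrow> real \<Rightarrow> real \<Rightarrow> real \<Rightarrow> real \<Rightarrow> real" where
  "Hnf_x a b e x y = nf_curve b x y * (2*b*x) + 3*a*x^2*(1+y) + 4*e*x^3"

definition Hnf_y :: "real \<Rightarrow> real \<Rightarrow> real \<Rightarrow> real \<Rightarrow> real" where
  "Hnf_y a b x y = nf_curve b x y * (1+y) + a*x^3"

definition Hnf_xx :: "real \<Rightarrow> real \<Rightarrow> real \<Rightarrow> real \<Rightarrow> real \<Rightarrow> real" where
  "Hnf_xx a b e x y = 4*b^2*x^2 + 2*b*nf_curve b x y + 6*a*x*(1+y) + 12*e*x^2"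

definition Hnf_xy :: "real \<Rightarrow> real \<Rightarrow> real \<Rightarrow> real \<Rightarrow> real" where
  "Hnf_xy a b x y = 2*b*x*(1+y) + 3*a*x^2"

definition Hnf_yy :: "real \<Rightarrow> real \<Rightarrow> real \<Rightarrow> real" where
  "Hnf_yy b x y = (1+y)^2 + nf_curve b x y"

lemma Hbar2_eq_Hnf:
  "Hbar2 h11 h20 h31 h40 =
     Hnf (8*h11*h20 + 4*h31) (4*h20 - 2*h11^2) (2*h11*(8*h11*h20 + 4*h31) - 8*(h20^2 + h40))"
  by (intro ext)
    (simp add: Hbar2_def Hnf_def nf_curve_def algebra_simps power2_eq_square power3_eq_cube power4_eq_xxxx)

lemma pdx_eqI:
  assumes "\<And>x y. ((\<lambda>t. H t y) has_real_derivative D x y) (at x)"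
  shows "pdx H = D"
  using assms by (intro ext) (simp add: pdx_def DERIV_imp_deriv)

lemma pdy_eqI:
  assumes "\<And>x y. ((\<lambda>t. H x t) has_real_derivative D x y) (at y)"
  shows "pdy H = D"
  using assms by (intro ext) (simp add: pdy_def DERIV_imp_deriv)

lemma pdx_Hnf: "pdx (Hnf a b e) = Hnf_x a b e"
  unfolding Hnf_def Hnf_x_def nf_curve_def
  by (rule pdx_eqI) (auto intro!: derivative_eq_intros simp: field_simps power2_eq_square power3_eq_cube)

lemma pdy_Hnf: "pdy (Hnf a b e) = Hnf_y a b"
  unfolding Hnf_def Hnf_y_def nf_curve_def
  by (rule pdy_eqI) (auto intro!: derivative_eq_intros simp: field_simps power2_eq_square)

lemma pdx_Hnf_x: "pdx (Hnf_x a b e) = Hnf_xx a b e"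
  unfolding Hnf_x_def Hnf_xx_def nf_curve_def
  by (rule pdx_eqI) (auto intro!: derivative_eq_intros simp: field_simps power2_eq_square)

lemma pdy_Hnf_x: "pdy (Hnf_x a b e) = Hnf_xy a b"
  unfolding Hnf_x_def Hnf_xy_def nf_curve_def
  by (rule pdy_eqI) (auto intro!: derivative_eq_intros simp: field_simps power2_eq_square)

lemma pdx_Hnf_y: "pdx (Hnf_y a b) = Hnf_xy a b"
  unfolding Hnf_y_def Hnf_xy_def nf_curve_def
  by (rule pdx_eqI) (auto intro!: derivative_eq_intros simp: field_simps power2_eq_square)

lemma pdy_Hnf_y: "pdy (Hnf_y a b) = Hnf_yy b"
  unfolding Hnf_y_def Hnf_yy_def nf_curve_def
  by (rule pdy_eqI) (auto intro!: derivative_eq_intros simp: field_simps power2_eq_square)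

lemma singular_point_Hnf_iff:
  "singular_point (Hnf a b e) u v \<longleftrightarrow> Hnf_y a b u v = 0 \<and> Hnf_x a b e u v = 0"
  by (simp add: singular_point_def ham_field_def pdy_Hnf pdx_Hnf)

lemma ham_jacobian_Hnf_origin:
  "ham_jacobian (Hnf a b e) 0 0 = vector [vector [0, 1], vector [0, 0]]"
  by (simp add: ham_jacobian_def pdy_Hnf pdx_Hnf pdx_Hnf_y pdy_Hnf_y pdx_Hnf_x pdy_Hnf_x
      Hnf_xy_def Hnf_yy_def Hnf_xx_def nf_curve_def)

lemma nilpotent_singular_point_Hnf: "nilpotent_singular_point (Hnf a b e) 0 0"
proof -
  define N :: "real^2^2" where "N = vector [vector [0, 1], vector [0, 0]]"
  have "mat_pow N 2 = 0"
    by (simp add: mat_pow_def numeral_2_eq_2 N_def vec_eq_iff forall_2 matrix_matrix_mult_def sum_2)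
  moreover have "N $ 1 $ 2 \<noteq> 0"
    by (simp add: N_def)
  moreover have "singular_point (Hnf a b e) 0 0"
    by (simp add: singular_point_Hnf_iff Hnf_y_def Hnf_x_def nf_curve_def)
  ultimately show ?thesis
    unfolding nilpotent_singular_point_def nilpotent_matrix_def ham_jacobian_Hnf_origin N_def[symmetric]
    by auto
qed

lemma isolated_singular_point_iff_eventually:
  "isolated_singular_point H x y \<longleftrightarrow>
     singular_point H x y \<and> (\<forall>\<^sub>F p in at (x, y). \<not> singular_point H (fst p) (snd p))"
  by (auto simp: isolated_singular_point_def eventually_at)

definition Hnf_cofactor :: "real \<Rightarrow> real \<Rightarrow> real \<Rightarrow> real \<Rightarrow> real \<Rightarrow> real" where
  "Hnf_cofactor a b e u v = 3*a*(1+v)^2 + 4*e*u*(1+v) - 2*a*b*u^2"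

lemma Hnf_x_Hnf_y_elim:
  "(1+v) * Hnf_x a b e u v - 2*b*u * Hnf_y a b u v = u^2 * Hnf_cofactor a b e u v"
  by (simp add: Hnf_x_def Hnf_y_def Hnf_cofactor_def nf_curve_def algebra_simps
      power2_eq_square power3_eq_cube)

lemma Hnf_y_axis: "Hnf_y a b 0 v = v * (1 + v/2) * (1+v)"
  by (simp add: Hnf_y_def nf_curve_def algebra_simps power2_eq_square)

lemma Hnf_cofactor_nonzero_near_origin:
  assumes "a \<noteq> 0 \<or> e \<noteq> 0"
  shows "\<forall>\<^sub>F p in nhds (0, 0). 1 + snd p \<noteq> 0 \<and> 1 + snd p / 2 \<noteq> 0 \<and>
           (fst p \<noteq> 0 \<longrightarrow> Hnf_cofactor a b e (fst p) (snd p) \<noteq> 0)"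
proof -
  have "((\<lambda>p. 1 + snd p) \<longlongrightarrow> 1) (nhds (0::real, 0::real))"
       "((\<lambda>p. 1 + snd p / 2) \<longlongrightarrow> 1) (nhds (0::real, 0::real))"
    by (auto intro!: tendsto_eq_intros filterlim_ident)
  from this[THEN tendsto_imp_eventually_ne]
  have v_ne: "\<forall>\<^sub>F p in nhds (0::real, 0::real). 1 + snd p \<noteq> 0 \<and> 1 + snd p / 2 \<noteq> 0"
    by (simp add: eventually_conj_iff)
  moreover have "\<forall>\<^sub>F p in nhds (0, 0). fst p \<noteq> 0 \<longrightarrow> Hnf_cofactor a b e (fst p) (snd p) \<noteq> 0"
  proof (cases "a = 0")
    case True
    from v_ne show ?thesis
      by eventually_elim (use True assms in \<open>simp add: Hnf_cofactor_def\<close>)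
  next
    case False
    have "((\<lambda>p. Hnf_cofactor a b e (fst p) (snd p)) \<longlongrightarrow> 3*a) (nhds (0, 0))"
      unfolding Hnf_cofactor_def by (auto intro!: tendsto_eq_intros filterlim_ident)
    then have "\<forall>\<^sub>F p in nhds (0, 0). Hnf_cofactor a b e (fst p) (snd p) \<noteq> 0"
      by (rule tendsto_imp_eventually_ne) (simp add: False)
    then show ?thesis
      by (rule eventually_mono) simp
  qed
  ultimately show ?thesis
    by (simp add: eventually_conj_iff)
qed

lemma isolated_singular_point_Hnf:
  assumes "a \<noteq> 0 \<or> e \<noteq> 0"
  shows "isolated_singular_point (Hnf a b e) 0 0"
proof -
  have "\<forall>\<^sub>F p in nhds (0, 0). p \<noteq> (0, 0) \<longrightarrow> \<not> singular_point (Hnf a b e) (fst p) (snd p)"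
    using Hnf_cofactor_nonzero_near_origin[where b = b, OF assms]
  proof eventually_elim
    case (elim p)
    obtain u v where p: "p = (u, v)"
      by (cases p)
    show ?case
    proof (intro impI notI)
      assume "p \<noteq> (0, 0)" and "singular_point (Hnf a b e) (fst p) (snd p)"
      then have ne: "(u, v) \<noteq> (0, 0)" and F: "Hnf_y a b u v = 0" "Hnf_x a b e u v = 0"
        by (auto simp: p singular_point_Hnf_iff)
      have "u^2 * Hnf_cofactor a b e u v = 0"
        using Hnf_x_Hnf_y_elim[of v a b e u] F by simp
      with elim have "u = 0"
        by (auto simp: p)
      with F(1) elim have "v = 0"
        by (simp add: Hnf_y_axis p)
      with \<open>u = 0\<close> ne show False
        by simp
    qed
  qed
  then show ?thesis
    by (simp add: isolated_singular_point_iff_eventually eventually_at_filter singular_point_Hnf_iff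
        Hnf_y_def Hnf_x_def nf_curve_def)
qed

lemma not_isolated_singular_point_Hnf: "\<not> isolated_singular_point (Hnf 0 b 0) 0 0"
proof
  define c where "c x = sqrt (1 - 2*b*x^2) - 1" for x :: real
  have "((\<lambda>x. 1 - 2*b*x^2) \<longlongrightarrow> 1) (at_right (0::real))"
    by (auto intro!: tendsto_eq_intros)
  then have "\<forall>\<^sub>F x in at_right 0. 1 - 2*b*x^2 > 0"
    by (rule order_tendstoD) simp
  then have on_curve: "\<forall>\<^sub>F x in at_right 0. singular_point (Hnf 0 b 0) x (c x)"
  proof eventually_elim
    case (elim x)
    then have "(1 + c x)^2 = 1 - 2*b*x^2"
      by (simp add: c_def)
    then have "nf_curve b x (c x) = 0"
      by (simp add: nf_curve_def algebra_simps power2_eq_square)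
    then show ?case
      by (simp add: singular_point_Hnf_iff Hnf_y_def Hnf_x_def)
  qed
  have "((\<lambda>x. (x, c x)) \<longlongrightarrow> (0, 0)) (at_right 0)"
    unfolding c_def by (auto intro!: tendsto_eq_intros)
  moreover have "\<forall>\<^sub>F x in at_right 0. (x, c x) \<noteq> (0, 0)"
    using eventually_at_right_less[of "0::real"] by (rule eventually_mono) simp
  ultimately have "filterlim (\<lambda>x. (x, c x)) (at (0, 0)) (at_right 0)"
    by (rule filterlim_atI)
  moreover assume "isolated_singular_point (Hnf 0 b 0) 0 0"
  ultimately have "\<forall>\<^sub>F x in at_right 0. \<not> singular_point (Hnf 0 b 0) x (c x)"
    unfolding isolated_singular_point_iff_eventually
    using eventually_compose_filterlim[where f = "\<lambda>x. (x, c x)"] by fastforce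
  with on_curve have "\<forall>\<^sub>F x in at_right (0::real). False"
    by eventually_elim simp
  then show False
    by simp
qed

lemma isolated_singular_point_Hnf_iff:
  "isolated_singular_point (Hnf a b e) 0 0 \<longleftrightarrow> a \<noteq> 0 \<or> e \<noteq> 0"
  using isolated_singular_point_Hnf not_isolated_singular_point_Hnf by blast

definition Hnf_y_slope_y :: "real \<Rightarrow> real \<Rightarrow> real \<Rightarrow> real \<Rightarrow> real" where
  "Hnf_y_slope_y b x y0 y = ((1+y0)^2 + (1+y0)*(1+y) + (1+y)^2 - 1)/2 + b*x^2"

definition Hnf_y_slope_x :: "real \<Rightarrow> real \<Rightarrow> real \<Rightarrow> real \<Rightarrow> real \<Rightarrow> real" where
  "Hnf_y_slope_x a b x0 x y0 = b*(x + x0)*(1+y0) + a*(x^2 + x*x0 + x0^2)"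

lemma Hnf_y_diff:
  "Hnf_y a b x y - Hnf_y a b x0 y0 = (y - y0) * Hnf_y_slope_y b x y0 y + (x - x0) * Hnf_y_slope_x a b x0 x y0"
  by (simp add: Hnf_y_def nf_curve_def Hnf_y_slope_x_def Hnf_y_slope_y_def
      field_simps power2_eq_square power3_eq_cube)

lemma Hnf_y_slope_y_diag: "Hnf_y_slope_y b x y y = Hnf_yy b x y"
  by (simp add: Hnf_y_slope_y_def Hnf_yy_def nf_curve_def field_simps power2_eq_square)

lemma Hnf_y_slope_x_diag: "Hnf_y_slope_x a b x x y = Hnf_xy a b x y"
  by (simp add: Hnf_y_slope_x_def Hnf_xy_def field_simps power2_eq_square)

text \<open>Implicit differentiation needs only continuity of the branch at the point: the
  slopes then converge to \<open>Hnf_yy\<close> and \<open>Hnf_xy\<close>.\<close>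
lemma Hnf_branch_has_derivative:
  assumes branch: "\<forall>\<^sub>F x in nhds x0. Hnf_y a b x (\<phi> x) = 0"
    and cont: "isCont \<phi> x0" and nondeg: "Hnf_yy b x0 (\<phi> x0) \<noteq> 0"
  shows "(\<phi> has_real_derivative - Hnf_xy a b x0 (\<phi> x0) / Hnf_yy b x0 (\<phi> x0)) (at x0)"
proof -
  define sy where "sy t = Hnf_y_slope_y b t (\<phi> x0) (\<phi> t)" for t
  define sx where "sx t = Hnf_y_slope_x a b x0 t (\<phi> x0)" for t
  have "isCont sy x0" "isCont sx x0"
    unfolding sy_def sx_def Hnf_y_slope_y_def Hnf_y_slope_x_def by (auto intro!: continuous_intros cont)
  then have sy: "(sy \<longlongrightarrow> Hnf_yy b x0 (\<phi> x0)) (at x0)"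
    and sx: "(sx \<longlongrightarrow> Hnf_xy a b x0 (\<phi> x0)) (at x0)"
    by (simp_all add: isCont_def sy_def sx_def Hnf_y_slope_y_diag Hnf_y_slope_x_diag)
  have "\<forall>\<^sub>F t in at x0. sy t \<noteq> 0"
    using sy nondeg by (rule tendsto_imp_eventually_ne)
  moreover have "\<forall>\<^sub>F t in at x0. t \<noteq> x0 \<and> Hnf_y a b t (\<phi> t) = 0"
    using branch by (auto simp: eventually_at_filter elim: eventually_mono)
  ultimately have "\<forall>\<^sub>F t in at x0. - sx t / sy t = (\<phi> t - \<phi> x0) / (t - x0)"
  proof eventually_elim
    case (elim t)
    have "(\<phi> t - \<phi> x0) * sy t = - ((t - x0) * sx t)"
      using Hnf_y_diff[of a b t "\<phi> t" x0 "\<phi> x0"] elim eventually_nhds_x_imp_x[OF branch]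
      by (simp add: sy_def sx_def)
    with elim show ?case
      by (simp add: field_simps)
  qed
  moreover have "((\<lambda>t. - sx t / sy t) \<longlongrightarrow> - Hnf_xy a b x0 (\<phi> x0) / Hnf_yy b x0 (\<phi> x0)) (at x0)"
    using sx sy nondeg by (intro tendsto_intros)
  ultimately show ?thesis
    unfolding has_field_derivative_iff by (rule Lim_transform_eventually[rotated])
qed

lemma Hnf_branch_chain:
  assumes "(\<phi> has_real_derivative D) (at x)"
  shows "((\<lambda>t. Hnf a b e t (\<phi> t)) has_real_derivative Hnf_x a b e x (\<phi> x) + Hnf_y a b x (\<phi> x) * D) (at x)"
  unfolding Hnf_def Hnf_x_def Hnf_y_def nf_curve_def
  by (rule derivative_eq_intros assms refl | simp)+ (simp add: field_simps power2_eq_square power3_eq_cube)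

lemma Hnf_x_branch_chain:
  assumes "(\<phi> has_real_derivative D) (at x)"
  shows "((\<lambda>t. Hnf_x a b e t (\<phi> t)) has_real_derivative Hnf_xx a b e x (\<phi> x) + Hnf_xy a b x (\<phi> x) * D) (at x)"
  unfolding Hnf_xx_def Hnf_x_def Hnf_xy_def nf_curve_def
  by (rule derivative_eq_intros assms refl | simp)+ (simp add: field_simps power2_eq_square power3_eq_cube)

lemma Hnf_branch_second_deriv_has_derivative:
  assumes "(\<phi> has_real_derivative 0) (at 0)" and "\<phi> 0 = 0"
  shows "((\<lambda>t. Hnf_xx a b e t (\<phi> t) + Hnf_xy a b t (\<phi> t) * (- Hnf_xy a b t (\<phi> t) / Hnf_yy b t (\<phi> t)))
           has_real_derivative 6*a) (at 0)"
  unfolding Hnf_xx_def Hnf_xy_def Hnf_yy_def nf_curve_def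
  by (rule derivative_eq_intros assms refl | simp add: assms)+

lemma higher_deriv_monomial_4: "(deriv ^^ 4) (\<lambda>x::real. e*x^4) 0 = 24*e"
proof -
  have "deriv (\<lambda>x::real. e*x^4) = (\<lambda>x. 4*e*x^3)"
       "deriv (\<lambda>x::real. 4*e*x^3) = (\<lambda>x. 12*e*x^2)"
       "deriv (\<lambda>x::real. 12*e*x^2) = (\<lambda>x. 24*e*x)"
       "deriv (\<lambda>x::real. 24*e*x) = (\<lambda>x. 24*e)"
    by (intro ext DERIV_imp_deriv; auto intro!: derivative_eq_intros)+
  then show ?thesis
    by (simp add: eval_nat_numeral)
qed

lemma Hnf_branch_regular_near_origin:
  fixes \<phi> :: "real \<Rightarrow> real"
  assumes "\<delta> > 0" and "\<phi> 0 = 0" and cont: "continuous_on {-\<delta><..<\<delta>} \<phi>"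
    and branch: "\<forall>x\<in>{-\<delta><..<\<delta>}. Hnf_y a b x (\<phi> x) = 0"
  obtains S where "open S" "0 \<in> S"
    and "\<And>x. x \<in> S \<Longrightarrow> Hnf_y a b x (\<phi> x) = 0 \<and> 1 + \<phi> x \<noteq> 0"
    and "\<And>x. x \<in> S \<Longrightarrow>
           (\<phi> has_real_derivative - Hnf_xy a b x (\<phi> x) / Hnf_yy b x (\<phi> x)) (at x)"
proof -
  let ?I = "{-\<delta><..<\<delta>}"
  have cont_at: "isCont \<phi> x" if "x \<in> ?I" for x
    using cont that by (simp add: continuous_on_eq_continuous_at)
  have "(\<phi> \<longlongrightarrow> 0) (nhds 0)"
    using cont_at[of 0] \<open>\<delta> > 0\<close> \<open>\<phi> 0 = 0\<close> tendsto_at_iff_tendsto_nhds[of \<phi> 0] by (simp add: isCont_def)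
  then have "((\<lambda>x. Hnf_yy b x (\<phi> x)) \<longlongrightarrow> 1) (nhds 0)" "((\<lambda>x. 1 + \<phi> x) \<longlongrightarrow> 1) (nhds 0)"
    unfolding Hnf_yy_def nf_curve_def by (auto intro!: tendsto_eq_intros filterlim_ident)
  then have "\<forall>\<^sub>F x in nhds 0. x \<in> ?I \<and> Hnf_yy b x (\<phi> x) \<noteq> 0 \<and> 1 + \<phi> x \<noteq> 0"
    using \<open>\<delta> > 0\<close> by (intro eventually_conj eventually_nhds_in_open tendsto_imp_eventually_ne) auto
  then obtain S where "open S" "0 \<in> S"
    and S: "\<And>x. x \<in> S \<Longrightarrow> x \<in> ?I \<and> Hnf_yy b x (\<phi> x) \<noteq> 0 \<and> 1 + \<phi> x \<noteq> 0"
    unfolding eventually_nhds by blast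
  show ?thesis
  proof
    fix x
    assume "x \<in> S"
    show "Hnf_y a b x (\<phi> x) = 0 \<and> 1 + \<phi> x \<noteq> 0"
      using S[OF \<open>x \<in> S\<close>] branch by auto
    show "(\<phi> has_real_derivative - Hnf_xy a b x (\<phi> x) / Hnf_yy b x (\<phi> x)) (at x)"
    proof (rule Hnf_branch_has_derivative)
      show "\<forall>\<^sub>F y in nhds x. Hnf_y a b y (\<phi> y) = 0"
        using eventually_nhds_in_open[OF \<open>open S\<close> \<open>x \<in> S\<close>] branch S
        by (auto elim: eventually_mono)
    qed (use S[OF \<open>x \<in> S\<close>] cont_at in auto)
  qed fact+
qed

lemma Hnf_branch_higher_derivs:
  fixes \<phi> :: "real \<Rightarrow> real" and e :: real
  assumes "\<delta> > 0" and "\<phi> 0 = 0" and cont: "continuous_on {-\<delta><..<\<delta>} \<phi>"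
    and branch: "\<forall>x\<in>{-\<delta><..<\<delta>}. Hnf_y a b x (\<phi> x) = 0"
  defines "f \<equiv> \<lambda>x. Hnf a b e x (\<phi> x)"
  shows "(deriv ^^ 0) f 0 = 0" "(deriv ^^ 1) f 0 = 0" "(deriv ^^ 2) f 0 = 0"
    and "(deriv ^^ 3) f 0 = 6*a" and "a = 0 \<Longrightarrow> (deriv ^^ 4) f 0 = 24*e"
proof -
  obtain S where "open S" "0 \<in> S"
    and S: "\<And>x. x \<in> S \<Longrightarrow> Hnf_y a b x (\<phi> x) = 0 \<and> 1 + \<phi> x \<noteq> 0"
    and implicit: "\<And>x. x \<in> S \<Longrightarrow>
           (\<phi> has_real_derivative - Hnf_xy a b x (\<phi> x) / Hnf_yy b x (\<phi> x)) (at x)"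
    using Hnf_branch_regular_near_origin[OF \<open>\<delta> > 0\<close> \<open>\<phi> 0 = 0\<close> cont branch] by blast
  have near: "\<forall>\<^sub>F y in nhds x. y \<in> S" if "x \<in> S" for x
    using \<open>open S\<close> that by (rule eventually_nhds_in_open)
  define \<phi>' where "\<phi>' x = - Hnf_xy a b x (\<phi> x) / Hnf_yy b x (\<phi> x)" for x
  have \<phi>': "(\<phi> has_real_derivative \<phi>' x) (at x)" if "x \<in> S" for x
    unfolding \<phi>'_def using that by (rule implicit)
  have df: "deriv f x = Hnf_x a b e x (\<phi> x)" if "x \<in> S" for x
    using Hnf_branch_chain[OF \<phi>'[OF that], where a = a and b = b and e = e] S[OF that]
    by (simp add: f_def DERIV_imp_deriv)
  define g where "g x = Hnf_xx a b e x (\<phi> x) + Hnf_xy a b x (\<phi> x) * \<phi>' x" for x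
  have ddf: "deriv (deriv f) x = g x" if "x \<in> S" for x
  proof -
    have "deriv (deriv f) x = deriv (\<lambda>y. Hnf_x a b e y (\<phi> y)) x"
      using near[OF that] by (intro deriv_cong_ev) (auto elim: eventually_mono simp: df)
    also have "\<dots> = g x"
      unfolding g_def by (rule DERIV_imp_deriv Hnf_x_branch_chain \<phi>' that)+
    finally show ?thesis .
  qed
  have "(\<phi> has_real_derivative 0) (at 0)"
    using \<phi>'[OF \<open>0 \<in> S\<close>] \<open>\<phi> 0 = 0\<close> by (simp add: \<phi>'_def Hnf_xy_def)
  then have "(g has_real_derivative 6*a) (at 0)"
    unfolding g_def \<phi>'_def using \<open>\<phi> 0 = 0\<close> by (rule Hnf_branch_second_deriv_has_derivative)
  then have "deriv (deriv (deriv f)) 0 = 6*a"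
    using near[OF \<open>0 \<in> S\<close>]
    by (subst deriv_cong_ev[where g = g]) (auto elim: eventually_mono simp: ddf DERIV_imp_deriv)
  then show "(deriv ^^ 3) f 0 = 6*a"
    by (simp add: eval_nat_numeral)
  show "(deriv ^^ 0) f 0 = 0"
    by (simp add: f_def \<open>\<phi> 0 = 0\<close> Hnf_def nf_curve_def)
  show "(deriv ^^ 1) f 0 = 0"
    using df[OF \<open>0 \<in> S\<close>] by (simp add: \<open>\<phi> 0 = 0\<close> Hnf_x_def nf_curve_def)
  show "(deriv ^^ 2) f 0 = 0"
    using ddf[OF \<open>0 \<in> S\<close>] by (simp add: eval_nat_numeral g_def \<phi>'_def \<open>\<phi> 0 = 0\<close>
        Hnf_xx_def Hnf_xy_def nf_curve_def)
  assume "a = 0"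
  have "f x = e*x^4" if "x \<in> S" for x
  proof -
    have "nf_curve b x (\<phi> x) * (1 + \<phi> x) = 0"
      using S[OF that] \<open>a = 0\<close> by (auto simp: Hnf_y_def)
    with S[OF that] show ?thesis
      by (simp add: f_def Hnf_def \<open>a = 0\<close>)
  qed
  then have "(deriv ^^ 4) f 0 = (deriv ^^ 4) (\<lambda>x. e*x^4) 0"
    using near[OF \<open>0 \<in> S\<close>] by (intro higher_deriv_cong_ev) (auto elim: eventually_mono)
  then show "(deriv ^^ 4) f 0 = 24*e"
    by (simp add: higher_deriv_monomial_4)
qed

text \<open>A branch through the origin exists on the interval of this radius: there
  \<open>\<bar>a x\<bar>, \<bar>b x\<bar>, \<bar>x\<bar> \<le> 1/50\<close>, which makes \<open>Hnf_y\<close> change sign across \<open>\<bar>y\<bar> \<le> 1/10\<close> and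
  keeps \<open>Hnf_y_slope_y \<ge> 1/2\<close> and \<open>\<bar>Hnf_y_slope_x\<bar> \<le> 1\<close> on that box.\<close>
definition branch_radius :: "real \<Rightarrow> real \<Rightarrow> real" where
  "branch_radius a b = 1 / (50 * (\<bar>a\<bar> + \<bar>b\<bar> + 1))"

lemma branch_radius_pos: "branch_radius a b > 0"
  by (simp add: branch_radius_def add_nonneg_pos)

lemma branch_radius_small:
  assumes "\<bar>x\<bar> \<le> branch_radius a b"
  shows "\<bar>a\<bar> * \<bar>x\<bar> \<le> 1/50" "\<bar>b\<bar> * \<bar>x\<bar> \<le> 1/50" "\<bar>x\<bar> \<le> 1/50"
proof -
  have "0 < \<bar>a\<bar> + \<bar>b\<bar> + 1"
    by (simp add: add_nonneg_pos)
  with assms have "50 * (\<bar>a\<bar> * \<bar>x\<bar>) + 50 * (\<bar>b\<bar> * \<bar>x\<bar>) + 50 * \<bar>x\<bar> \<le> 1"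
    by (simp add: branch_radius_def field_simps)
  moreover have "0 \<le> \<bar>a\<bar> * \<bar>x\<bar>" "0 \<le> \<bar>b\<bar> * \<bar>x\<bar>"
    by simp_all
  ultimately show "\<bar>a\<bar> * \<bar>x\<bar> \<le> 1/50" "\<bar>b\<bar> * \<bar>x\<bar> \<le> 1/50" "\<bar>x\<bar> \<le> 1/50"
    by linarith+
qed

lemma Hnf_y_slope_y_ge:
  assumes "\<bar>x\<bar> \<le> branch_radius a b" "\<bar>y0\<bar> \<le> 1/10" "\<bar>y\<bar> \<le> 1/10"
  shows "Hnf_y_slope_y b x y0 y \<ge> 1/2"
proof -
  have "9/10 \<le> 1 + y0" "9/10 \<le> 1 + y"
    using assms by auto
  then have quad: "81/100 \<le> (1 + y0) * (1 + y0)" "81/100 \<le> (1 + y0) * (1 + y)"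
    "81/100 \<le> (1 + y) * (1 + y)"
    using mult_mono[of "9/10" "1 + y0" "9/10" "1 + y0"] mult_mono[of "9/10" "1 + y0" "9/10" "1 + y"]
      mult_mono[of "9/10" "1 + y" "9/10" "1 + y"] by simp_all
  have "\<bar>b * x^2\<bar> \<le> 1/50"
  proof -
    have "\<bar>b * x^2\<bar> = (\<bar>b\<bar> * \<bar>x\<bar>) * \<bar>x\<bar>"
      by (simp add: abs_mult power2_eq_square)
    also have "\<dots> \<le> (1/50) * 1"
      using branch_radius_small[OF assms(1)] by (intro mult_mono) auto
    finally show ?thesis
      by simp
  qed
  then have "-(1/50) \<le> b * x^2"
    by (simp add: abs_le_iff)
  moreover have "1/2 \<le> (p + q + r - 1)/2 + t"
    if "81/100 \<le> p" "81/100 \<le> q" "81/100 \<le> r" "-(1/50) \<le> t" for p q r t :: real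
    using that by (simp add: field_simps)
  ultimately show ?thesis
    unfolding Hnf_y_slope_y_def power2_eq_square[of "1 + _"] using quad by blast
qed

lemma Hnf_y_slope_x_bound:
  assumes "\<bar>x\<bar> \<le> branch_radius a b" "\<bar>x0\<bar> \<le> branch_radius a b" "\<bar>y0\<bar> \<le> 1/10"
  shows "\<bar>Hnf_y_slope_x a b x0 x y0\<bar> \<le> 1"
proof -
  note s = branch_radius_small[OF assms(1)] and s0 = branch_radius_small[OF assms(2)]
  have "\<bar>b * (x + x0) * (1 + y0)\<bar> = (\<bar>b\<bar> * \<bar>x + x0\<bar>) * \<bar>1 + y0\<bar>"
    by (simp add: abs_mult)
  also have "\<dots> \<le> (2/50) * 2"
  proof (intro mult_mono)
    have "\<bar>b\<bar> * \<bar>x + x0\<bar> \<le> \<bar>b\<bar> * (\<bar>x\<bar> + \<bar>x0\<bar>)"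
      by (intro mult_left_mono) auto
    then show "\<bar>b\<bar> * \<bar>x + x0\<bar> \<le> 2/50"
      using s s0 by (simp add: algebra_simps)
  qed (use assms(3) in auto)
  finally have t1: "\<bar>b * (x + x0) * (1 + y0)\<bar> \<le> 4/50"
    by simp
  have "\<bar>x^2 + x*x0 + x0^2\<bar> \<le> \<bar>x\<bar> * \<bar>x\<bar> + \<bar>x\<bar> * \<bar>x0\<bar> + \<bar>x0\<bar> * \<bar>x0\<bar>"
    by (simp add: abs_mult power2_eq_square abs_triangle_ineq order_trans[OF abs_triangle_ineq])
  also have "\<dots> \<le> \<bar>x\<bar> * 1 + \<bar>x\<bar> * 1 + \<bar>x0\<bar> * 1"
    using s s0 by (intro add_mono mult_left_mono) auto
  finally have "\<bar>a\<bar> * \<bar>x^2 + x*x0 + x0^2\<bar> \<le> \<bar>a\<bar> * (2 * \<bar>x\<bar> + \<bar>x0\<bar>)"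
    by (intro mult_left_mono) auto
  also have "\<dots> \<le> 3/50"
    using s s0 by (simp add: algebra_simps)
  finally have t2: "\<bar>a * (x^2 + x*x0 + x0^2)\<bar> \<le> 3/50"
    by (simp add: abs_mult)
  show ?thesis
    unfolding Hnf_y_slope_x_def
    using t1 t2 abs_triangle_ineq[of "b * (x + x0) * (1 + y0)" "a * (x^2 + x*x0 + x0^2)"] by linarith
qed

lemma Hnf_y_roots_lipschitz:
  assumes "\<bar>x\<bar> \<le> branch_radius a b" "\<bar>x0\<bar> \<le> branch_radius a b" "\<bar>y\<bar> \<le> 1/10" "\<bar>y0\<bar> \<le> 1/10"
    and "Hnf_y a b x y = 0" "Hnf_y a b x0 y0 = 0"
  shows "\<bar>y - y0\<bar> \<le> 2 * \<bar>x - x0\<bar>"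
proof -
  have sy: "Hnf_y_slope_y b x y0 y \<ge> 1/2"
    using Hnf_y_slope_y_ge assms by blast
  have "(y - y0) * Hnf_y_slope_y b x y0 y = - ((x - x0) * Hnf_y_slope_x a b x0 x y0)"
    using Hnf_y_diff[of a b x y x0 y0] assms(5,6) by simp
  from arg_cong[OF this, of abs] sy
  have "\<bar>y - y0\<bar> * Hnf_y_slope_y b x y0 y = \<bar>x - x0\<bar> * \<bar>Hnf_y_slope_x a b x0 x y0\<bar>"
    by (simp add: abs_mult)
  also have "\<dots> \<le> \<bar>x - x0\<bar>"
    using Hnf_y_slope_x_bound[OF assms(1-2,4)] mult_left_mono[of _ 1 "\<bar>x - x0\<bar>"] by simp
  finally have "\<bar>y - y0\<bar> * Hnf_y_slope_y b x y0 y \<le> \<bar>x - x0\<bar>" .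
  moreover have "\<bar>y - y0\<bar> * (1/2) \<le> \<bar>y - y0\<bar> * Hnf_y_slope_y b x y0 y"
    using sy by (intro mult_left_mono) auto
  ultimately have "\<bar>y - y0\<bar> * (1/2) \<le> \<bar>x - x0\<bar>"
    by linarith
  then show ?thesis
    by simp
qed

lemma Hnf_y_root_in_box:
  assumes "\<bar>x\<bar> \<le> branch_radius a b"
  shows "\<exists>y. \<bar>y\<bar> \<le> 1/10 \<and> Hnf_y a b x y = 0"
proof -
  note s = branch_radius_small[OF assms]
  have bx2: "\<bar>b * x^2\<bar> \<le> 1/50"
  proof -
    have "\<bar>b * x^2\<bar> = (\<bar>b\<bar> * \<bar>x\<bar>) * \<bar>x\<bar>"
      by (simp add: abs_mult power2_eq_square)
    also have "\<dots> \<le> (1/50) * 1"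
      using s by (intro mult_mono) auto
    finally show ?thesis
      by simp
  qed
  have ax3: "\<bar>a * x^3\<bar> \<le> 1/50"
  proof -
    have "\<bar>a * x^3\<bar> = (\<bar>a\<bar> * \<bar>x\<bar>) * (\<bar>x\<bar> * \<bar>x\<bar>)"
      by (simp add: abs_mult power3_eq_cube)
    also have "\<dots> \<le> (1/50) * (1 * 1)"
      using s by (intro mult_mono) auto
    finally show ?thesis
      by simp
  qed
  have "Hnf_y a b x (-1/10) = -(19/200)*(9/10) + b*x^2*(9/10) + a*x^3"
       "Hnf_y a b x (1/10) = (21/200)*(11/10) + b*x^2*(11/10) + a*x^3"
    by (simp_all add: Hnf_y_def nf_curve_def algebra_simps power2_eq_square)
  then have "Hnf_y a b x (-1/10) \<le> 0" "0 \<le> Hnf_y a b x (1/10)"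
    using bx2 ax3 unfolding abs_le_iff by linarith+
  moreover have "continuous_on {-1/10..1/10} (Hnf_y a b x)"
    unfolding Hnf_y_def nf_curve_def by (intro continuous_intros) auto
  ultimately obtain y where "-1/10 \<le> y" "y \<le> 1/10" "Hnf_y a b x y = 0"
    using IVT'[of "Hnf_y a b x" "-1/10" 0 "1/10"] by auto
  then show ?thesis
    by (intro exI[of _ y]) auto
qed

text \<open>Choosing any root in the box gives a Lipschitz, hence continuous, branch.\<close>
lemma Hnf_branch_exists:
  "\<exists>\<phi>. \<phi> 0 = 0 \<and> continuous_on {-branch_radius a b<..<branch_radius a b} \<phi> \<and>
      (\<forall>x\<in>{-branch_radius a b<..<branch_radius a b}. Hnf_y a b x (\<phi> x) = 0)"
proof -
  let ?r = "branch_radius a b"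
  define \<phi> where "\<phi> x = (SOME y. \<bar>y\<bar> \<le> 1/10 \<and> Hnf_y a b x y = 0)" for x
  have root: "\<bar>\<phi> x\<bar> \<le> 1/10 \<and> Hnf_y a b x (\<phi> x) = 0" if "\<bar>x\<bar> \<le> ?r" for x
    unfolding \<phi>_def using someI_ex[OF Hnf_y_root_in_box[OF that]] .
  have "\<bar>0::real\<bar> \<le> ?r"
    using branch_radius_pos[of a b] by simp
  moreover have "Hnf_y a b 0 0 = 0"
    by (simp add: Hnf_y_def nf_curve_def)
  ultimately have "\<phi> 0 = 0"
    using Hnf_y_roots_lipschitz[of 0 a b 0 "\<phi> 0" 0] root[of 0] by simp
  moreover have "continuous_on {-?r<..<?r} \<phi>"
  proof (rule lipschitz_on_continuous_on[of 2], rule lipschitz_onI)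
    fix x y
    assume "x \<in> {-?r<..<?r}" "y \<in> {-?r<..<?r}"
    then have "\<bar>x\<bar> \<le> ?r" "\<bar>y\<bar> \<le> ?r"
      by auto
    then show "dist (\<phi> x) (\<phi> y) \<le> 2 * dist x y"
      using Hnf_y_roots_lipschitz[of x a b y "\<phi> x" "\<phi> y"] root by (simp add: dist_real_def)
  qed simp
  moreover have "\<forall>x\<in>{-?r<..<?r}. Hnf_y a b x (\<phi> x) = 0"
    using root by auto
  ultimately show ?thesis
    by blast
qed

lemma H0star_leading_Hnf_3: "H0star_leading (Hnf a b e) 3 c \<longleftrightarrow> a \<noteq> 0 \<and> c = a"
proof
  assume "H0star_leading (Hnf a b e) 3 c"
  then obtain \<delta> \<phi> where branch: "\<delta> > 0" "\<phi> 0 = 0" "continuous_on {-\<delta><..<\<delta>} \<phi>"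
      "\<forall>x\<in>{-\<delta><..<\<delta>}. Hnf_y a b x (\<phi> x) = 0"
    and "(deriv ^^ 3) (\<lambda>x. Hnf a b e x (\<phi> x)) 0 / fact 3 = c" "c \<noteq> 0"
    unfolding H0star_leading_def pdy_Hnf by blast
  with Hnf_branch_higher_derivs(4)[OF branch, of e] show "a \<noteq> 0 \<and> c = a"
    by (simp add: eval_nat_numeral)
next
  assume "a \<noteq> 0 \<and> c = a"
  moreover obtain \<phi> where branch: "\<phi> 0 = 0" "continuous_on {-branch_radius a b<..<branch_radius a b} \<phi>"
      "\<forall>x\<in>{-branch_radius a b<..<branch_radius a b}. Hnf_y a b x (\<phi> x) = 0"
    using Hnf_branch_exists by blast
  note derivs = Hnf_branch_higher_derivs[OF branch_radius_pos branch, of e]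
  ultimately show "H0star_leading (Hnf a b e) 3 c"
    unfolding H0star_leading_def pdy_Hnf using branch_radius_pos branch
    by (intro exI[of _ "branch_radius a b"] exI[of _ \<phi>] conjI)
      (auto simp: eval_nat_numeral less_Suc_eq)
qed

lemma H0star_leading_Hnf_4: "H0star_leading (Hnf a b e) 4 c \<longleftrightarrow> a = 0 \<and> e \<noteq> 0 \<and> c = e"
proof
  assume "H0star_leading (Hnf a b e) 4 c"
  then obtain \<delta> \<phi> where branch: "\<delta> > 0" "\<phi> 0 = 0" "continuous_on {-\<delta><..<\<delta>} \<phi>"
      "\<forall>x\<in>{-\<delta><..<\<delta>}. Hnf_y a b x (\<phi> x) = 0"
    and lower: "\<forall>j<4. (deriv ^^ j) (\<lambda>x. Hnf a b e x (\<phi> x)) 0 = 0"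
    and leading: "(deriv ^^ 4) (\<lambda>x. Hnf a b e x (\<phi> x)) 0 / fact 4 = c" and "c \<noteq> 0"
    unfolding H0star_leading_def pdy_Hnf by blast
  have "a = 0"
    using lower[rule_format, of 3] Hnf_branch_higher_derivs(4)[OF branch, of e] by simp
  with leading Hnf_branch_higher_derivs(5)[OF branch, of e] \<open>c \<noteq> 0\<close>
  show "a = 0 \<and> e \<noteq> 0 \<and> c = e"
    by (simp add: eval_nat_numeral)
next
  assume "a = 0 \<and> e \<noteq> 0 \<and> c = e"
  moreover obtain \<phi> where branch: "\<phi> 0 = 0" "continuous_on {-branch_radius a b<..<branch_radius a b} \<phi>"
      "\<forall>x\<in>{-branch_radius a b<..<branch_radius a b}. Hnf_y a b x (\<phi> x) = 0"
    using Hnf_branch_exists by blast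
  note derivs = Hnf_branch_higher_derivs[OF branch_radius_pos branch, of e]
  ultimately show "H0star_leading (Hnf a b e) 4 c"
    unfolding H0star_leading_def pdy_Hnf using branch_radius_pos branch
    by (intro exI[of _ "branch_radius a b"] exI[of _ \<phi>] conjI)
      (auto simp: eval_nat_numeral less_Suc_eq)
qed

lemma cusp_of_order_Hnf: "cusp_of_order (Hnf a b e) 1 \<longleftrightarrow> a \<noteq> 0"
  by (simp add: cusp_of_order_def H0star_leading_Hnf_3)

lemma nilpotent_saddle_of_order_Hnf: "nilpotent_saddle_of_order (Hnf a b e) 1 \<longleftrightarrow> a = 0 \<and> e < 0"
  by (auto simp: nilpotent_saddle_of_order_def H0star_leading_Hnf_4)

lemma nilpotent_center_of_order_Hnf: "nilpotent_center_of_order (Hnf a b e) 1 \<longleftrightarrow> a = 0 \<and> e > 0"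
  by (auto simp: nilpotent_center_of_order_def H0star_leading_Hnf_4)

lemma isolated_nilpotent_singular_point_Hnf_iff:
  "isolated_nilpotent_singular_point (Hnf a b e) 0 0 \<longleftrightarrow> a \<noteq> 0 \<or> e \<noteq> 0"
  by (simp add: isolated_nilpotent_singular_point_def isolated_singular_point_Hnf_iff
      nilpotent_singular_point_Hnf)

theorem theorem5:
  fixes h11 h20 h31 h40 :: real
  defines "H \<equiv> Hbar2 h11 h20 h31 h40"
  shows "(isolated_nilpotent_singular_point H 0 0 \<longleftrightarrow>
            (h31 \<noteq> -2*h11*h20 \<or>
             (h31 = -2*h11*h20 \<and> h20^2 + h40 > 0) \<or>
             (h31 = -2*h11*h20 \<and> h20^2 + h40 < 0)))
       \<and> (cusp_of_order H 1 \<longleftrightarrow> h31 \<noteq> -2*h11*h20)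
       \<and> (nilpotent_saddle_of_order H 1 \<longleftrightarrow> h31 = -2*h11*h20 \<and> h20^2 + h40 > 0)
       \<and> (nilpotent_center_of_order H 1 \<longleftrightarrow> h31 = -2*h11*h20 \<and> h20^2 + h40 < 0)"
proof -
  define a where "a = 8*h11*h20 + 4*h31"
  define e where "e = 2*h11*(8*h11*h20 + 4*h31) - 8*(h20^2 + h40)"
  have H: "H = Hnf a (4*h20 - 2*h11^2) e"
    unfolding H_def a_def e_def by (rule Hbar2_eq_Hnf)
  have "a = 0 \<longleftrightarrow> h31 = -2*h11*h20" and "a = 0 \<Longrightarrow> e = - 8*(h20^2 + h40)"
    unfolding a_def e_def by auto
  then show ?thesis
    unfolding H isolated_nilpotent_singular_point_Hnf_iff cusp_of_order_Hnf
      nilpotent_saddle_of_order_Hnf nilpotent_center_of_order_Hnf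
    by auto
qed

end
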